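(* Let $D$ be a finite set, $k\ge 2$, and let $P:D^k\to\{0,1\}$ be a $k$-ary predicate with $P^{-1}(1)\neq\emptyset$. Suppose there exists $z\in D$ such that for all $x_1,\dots,x_{k-1}\in D$ and all permutations $\sigma$ of the $k$ coordinates, $P(\sigma(x_1,\dots,x_{k-1},z))=0$. Then for every weighted directed $k$-uniform hypergraph $H=(V,E,w)$, every $0<\varepsilon<1$, and every $\varepsilon$-$P$-sparsifier $H_\varepsilon=(V,E_\varepsilon,w_\varepsilon)$ of $H$, we have $|E_\varepsilon|=\Omega(|E|)$, with the implied constant independent of $H$ and $\varepsilon$.
   Context: $\sigma(\cdot)$ permutes the entries of a tuple. A weighted directed $k$-uniform hypergraph $H=(V,E,w)$ has $E$ a set of ordered $k$-tuples of distinct vertices and $w:E\to\mathbb{R}_{>0}$. For $A:V\to D$, $\mathrm{Val}_{H,P}(A)=\sum_{e\in E}w(e)P(A(e))$ with $A$ applied entrywise. An $\varepsilon$-$P$-sparsifier of $H$ is $H_\varepsilon=(V,E_\varepsilon,w_\varepsilon)$ with $E_\varepsilon\subseteq E$, $w_\varepsilon:E_\varepsilon\to\mathbb{R}_{>0}$, such that for every $A:V\to D$, $(1-\varepsilon)\mathrm{Val}_{H,P}(A)\le\mathrm{Val}_{H_\varepsilon,P}(A)\le(1+\varepsilon)\mathrm{Val}_{H,P}(A)$. *)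

theory Defs
  imports Complex_Main "HOL-Combinatorics.Permutations"
begin

text \<open>Tuples are lists; a k-tuple over D is a list of length k with entries in D.
  Applying a permutation sigma of the k coordinates to a tuple t gives
  the tuple whose i-th entry is t ! (sigma i).\<close>

definition permute_tuple :: "(nat \<Rightarrow> nat) \<Rightarrow> 'a list \<Rightarrow> 'a list" where
  "permute_tuple \<sigma> t = map (\<lambda>i. t ! \<sigma> i) [0..<length t]"

definition wdk_hypergraph :: "nat \<Rightarrow> 'v set \<Rightarrow> 'v list set \<Rightarrow> ('v list \<Rightarrow> real) \<Rightarrow> bool" where
  "wdk_hypergraph k V E w \<longleftrightarrow> finite V \<and>
     (\<forall>e\<in>E. length e = k \<and> distinct e \<and> set e \<subseteq> V) \<and> (\<forall>e\<in>E. w e > 0)"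

definition Val :: "('d list \<Rightarrow> bool) \<Rightarrow> 'v list set \<Rightarrow> ('v list \<Rightarrow> real) \<Rightarrow> ('v \<Rightarrow> 'd) \<Rightarrow> real" where
  "Val P E w A = (\<Sum>e\<in>E. w e * (if P (map A e) then 1 else 0))"

definition is_sparsifier ::
  "'d set \<Rightarrow> ('d list \<Rightarrow> bool) \<Rightarrow> real \<Rightarrow> 'v set \<Rightarrow> 'v list set \<Rightarrow> ('v list \<Rightarrow> real)
     \<Rightarrow> 'v list set \<Rightarrow> ('v list \<Rightarrow> real) \<Rightarrow> bool" where
  "is_sparsifier D P \<epsilon> V E w E\<epsilon> w\<epsilon> \<longleftrightarrow> E\<epsilon> \<subseteq> E \<and> (\<forall>e\<in>E\<epsilon>. w\<epsilon> e > 0) \<and>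
     (\<forall>A. (\<forall>v\<in>V. A v \<in> D) \<longrightarrow>
        (1 - \<epsilon>) * Val P E w A \<le> Val P E\<epsilon> w\<epsilon> A \<and> Val P E\<epsilon> w\<epsilon> A \<le> (1 + \<epsilon>) * Val P E w A)"

end

theory Submission
  imports Defs "HOL-Combinatorics.Multiset_Permutations"
begin

text \<open>Suppose some hyperedge e of H has no hyperedge of the sparsifier on the same vertex set.
  Assign a satisfying tuple of P to e and the blocking value z to every other vertex: then e
  contributes w e > 0 to the value of H, while every hyperedge of the sparsifier contains a vertex
  outside e, hence takes the value z somewhere and is unsatisfied.  So the sparsifier must keep
  a hyperedge on every vertex set of H, and since at most k! hyperedges share a vertex set,
  |E| \<le> k! |E\<epsilon>|.\<close>

definition blocking_value :: "nat \<Rightarrow> 'd set \<Rightarrow> ('d list \<Rightarrow> bool) \<Rightarrow> 'd \<Rightarrow> bool" where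
  "blocking_value k D P z \<longleftrightarrow>
     (\<forall>xs \<sigma>. length xs = k - 1 \<and> set xs \<subseteq> D \<and> \<sigma> permutes {..<k}
        \<longrightarrow> \<not> P (permute_tuple \<sigma> (xs @ [z])))"

lemma permute_tuple_involution:
  assumes "\<sigma> permutes {..<length t}" and "\<And>i. \<sigma> (\<sigma> i) = i"
  shows "permute_tuple \<sigma> (permute_tuple \<sigma> t) = t"
proof -
  have "\<sigma> i < length t" if "i < length t" for i
    using assms(1) that by (metis lessThan_iff permutes_in_image)
  then show ?thesis
    unfolding permute_tuple_def using assms(2) by (intro nth_equalityI) auto
qed

lemma blocking_value_not_P:
  assumes "blocking_value k D P z" and "length y = k" and "set y \<subseteq> D" and "z \<in> set y"
  shows "\<not> P y"
proof -
  obtain j where j: "j < k" "y ! j = z" using assms(2,4) by (metis in_set_conv_nth)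
  define \<sigma> where "\<sigma> = Transposition.transpose j (k - 1)"
  have \<sigma>: "\<sigma> permutes {..<k}" unfolding \<sigma>_def using j by (intro permutes_swap_id) auto
  define u where "u = permute_tuple \<sigma> y"
  have len_u: "length u = k" unfolding u_def permute_tuple_def using assms(2) by simp
  have "set u \<subseteq> set y"
    unfolding u_def permute_tuple_def using \<sigma> assms(2)
    by (auto intro!: nth_mem) (metis lessThan_iff permutes_in_image)
  with assms(3) have u_D: "set (take (k - 1) u) \<subseteq> D" by (meson order.trans set_take_subset)
  have "0 < k" using j by simp
  then have "u = take (k - 1) u @ [u ! (k - 1)]"
    using len_u take_Suc_conv_app_nth[of "k - 1" u] by simp
  also have "u ! (k - 1) = z"
    using j assms(2) unfolding u_def permute_tuple_def \<sigma>_def by simp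
  finally have u_split: "u = take (k - 1) u @ [z]" .
  have "y = permute_tuple \<sigma> u"
    unfolding u_def using \<sigma> assms(2) by (simp add: permute_tuple_involution \<sigma>_def)
  also have "\<dots> = permute_tuple \<sigma> (take (k - 1) u @ [z])" using u_split by simp
  finally show ?thesis
    using assms(1) \<sigma> u_D len_u unfolding blocking_value_def by auto
qed

lemma assignment_extending_tuple:
  assumes "distinct e" and "length t = length e"
  obtains A :: "'v \<Rightarrow> 'd" where "map A e = t" and "\<And>v. v \<notin> set e \<Longrightarrow> A v = z"
proof
  define A where "A v = (case map_of (zip e t) v of Some d \<Rightarrow> d | None \<Rightarrow> z)" for v
  show "map A e = t"
    using assms unfolding A_def by (intro nth_equalityI) (simp_all add: map_of_zip_nth)
  show "A v = z" if "v \<notin> set e" for v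
  proof -
    have "map_of (zip e t) v = None" using that assms(2) by simp
    then show ?thesis unfolding A_def by simp
  qed
qed

lemma Val_ge_member:
  assumes "finite E" and "e \<in> E" and "\<And>e. e \<in> E \<Longrightarrow> w e \<ge> 0" and "P (map A e)"
  shows "w e \<le> Val P E w A"
proof -
  have "w e * (if P (map A e) then 1 else 0) \<le> Val P E w A"
    unfolding Val_def using assms(1-3) by (intro member_le_sum) auto
  with assms(4) show ?thesis by simp
qed

lemma Val_eq_0:
  assumes "\<And>e. e \<in> E \<Longrightarrow> \<not> P (map A e)"
  shows "Val P E w A = 0"
  unfolding Val_def using assms by simp

lemma wdk_hypergraph_finite_edges:
  assumes "wdk_hypergraph k V E w"
  shows "finite E"
proof (rule finite_subset)
  show "finite {xs. set xs \<subseteq> V \<and> length xs = k}"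
    using assms unfolding wdk_hypergraph_def by (intro finite_lists_length_eq) auto
qed (use assms in \<open>auto simp: wdk_hypergraph_def\<close>)

lemma sparsifier_keeps_vertex_sets:
  assumes H: "wdk_hypergraph k V E w" and sparse: "is_sparsifier D P \<epsilon> V E w E\<epsilon> w\<epsilon>"
    and "\<epsilon> < 1" and t: "length t = k" "set t \<subseteq> D" "P t"
    and z: "z \<in> D" "blocking_value k D P z" and e: "e \<in> E"
  shows "\<exists>e'\<in>E\<epsilon>. set e' = set e"
proof (rule ccontr)
  assume no_copy: "\<not> (\<exists>e'\<in>E\<epsilon>. set e' = set e)"
  have len_e: "length e = k" and dist_e: "distinct e" using H e by (auto simp: wdk_hypergraph_def)
  obtain A where A_e: "map A e = t" and A_out: "\<And>v. v \<notin> set e \<Longrightarrow> A v = z"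
    using assignment_extending_tuple[OF dist_e] len_e t(1) by metis
  have A_D: "A v \<in> D" for v
    using A_e A_out t(2) z(1) by (cases "v \<in> set e") auto
  have "w e \<le> Val P E w A"
    using H e t(3) A_e by (intro Val_ge_member wdk_hypergraph_finite_edges)
      (auto simp: wdk_hypergraph_def less_imp_le)
  moreover have "w e > 0" using H e by (simp add: wdk_hypergraph_def)
  ultimately have "(1 - \<epsilon>) * Val P E w A > 0" using \<open>\<epsilon> < 1\<close> by simp
  moreover have "Val P E\<epsilon> w\<epsilon> A = 0"
  proof (rule Val_eq_0)
    fix e' assume "e' \<in> E\<epsilon>"
    then have e'_E: "e' \<in> E" and e'_ne: "set e' \<noteq> set e"
      using sparse no_copy by (auto simp: is_sparsifier_def)
    have len_e': "length e' = k" and "distinct e'" using H e'_E by (auto simp: wdk_hypergraph_def)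
    then have "card (set e') = card (set e)" using len_e dist_e by (simp add: distinct_card)
    with e'_ne have "\<not> set e' \<subseteq> set e" using card_subset_eq[of "set e" "set e'"] by auto
    then obtain v where "v \<in> set e'" "v \<notin> set e" by blast
    then have "z \<in> set (map A e')" using A_out by force
    then show "\<not> P (map A e')"
      using len_e' A_D by (intro blocking_value_not_P[OF z(2)]) auto
  qed
  moreover have "(1 - \<epsilon>) * Val P E w A \<le> Val P E\<epsilon> w\<epsilon> A"
    using sparse A_D by (simp add: is_sparsifier_def)
  ultimately show False by simp
qed

lemma card_le_fact_mul_card_if_vertex_sets_covered:
  assumes "finite F" and F: "\<And>e. e \<in> F \<Longrightarrow> length e = k \<and> distinct e"
    and E: "\<And>e. e \<in> E \<Longrightarrow> distinct e \<and> set e \<in> set ` F"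
  shows "card E \<le> fact k * card F"
proof -
  have "E \<subseteq> (\<Union>S\<in>set ` F. permutations_of_set S)"
    using E unfolding permutations_of_set_def by auto
  then have "card E \<le> card (\<Union>S\<in>set ` F. permutations_of_set S)"
    using assms(1) by (intro card_mono) auto
  also have "\<dots> \<le> (\<Sum>S\<in>set ` F. card (permutations_of_set S))"
    using assms(1) by (intro card_UN_le) auto
  also have "\<dots> = (\<Sum>S\<in>set ` F. fact k)"
    using F by (intro sum.cong) (auto simp: distinct_card)
  also have "\<dots> \<le> fact k * card F"
    using assms(1) by (simp add: card_image_le)
  finally show ?thesis .
qed

theorem proposition17:
  fixes D :: "'d set" and P :: "'d list \<Rightarrow> bool" and k :: nat
  assumes "finite D" and "k \<ge> 2"
    and "\<exists>t. length t = k \<and> set t \<subseteq> D \<and> P t"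
    and "\<exists>z\<in>D. \<forall>xs \<sigma>. length xs = k - 1 \<and> set xs \<subseteq> D \<and> \<sigma> permutes {..<k}
            \<longrightarrow> \<not> P (permute_tuple \<sigma> (xs @ [z]))"
  shows "\<exists>c>0. \<forall>(V :: nat set) E w \<epsilon> E\<epsilon> w\<epsilon>.
           wdk_hypergraph k V E w \<and> 0 < \<epsilon> \<and> \<epsilon> < 1 \<and> is_sparsifier D P \<epsilon> V E w E\<epsilon> w\<epsilon>
           \<longrightarrow> real (card E\<epsilon>) \<ge> c * real (card E)"
proof (intro exI[of _ "1 / fact k"] conjI allI impI)
  obtain t where t: "length t = k" "set t \<subseteq> D" "P t" using assms(3) by blast
  obtain z where z: "z \<in> D" "blocking_value k D P z"
    using assms(4) unfolding blocking_value_def by blast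
  fix V :: "nat set" and E w \<epsilon> E\<epsilon> w\<epsilon>
  assume H: "wdk_hypergraph k V E w \<and> 0 < \<epsilon> \<and> \<epsilon> < 1 \<and> is_sparsifier D P \<epsilon> V E w E\<epsilon> w\<epsilon>"
  then have "E\<epsilon> \<subseteq> E" and "finite E" by (auto simp: is_sparsifier_def wdk_hypergraph_finite_edges)
  moreover have "set e \<in> set ` E\<epsilon>" if "e \<in> E" for e
    using H sparsifier_keeps_vertex_sets[OF _ _ _ t z that] by (metis image_eqI)
  ultimately have "card E \<le> fact k * card E\<epsilon>"
    using H by (intro card_le_fact_mul_card_if_vertex_sets_covered)
      (auto simp: wdk_hypergraph_def intro: finite_subset)
  then have "real (card E) \<le> fact k * real (card E\<epsilon>)"
    by (metis of_nat_fact of_nat_le_iff of_nat_mult)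
  then show "1 / fact k * real (card E) \<le> real (card E\<epsilon>)"
    by (simp add: field_simps)
qed simp

end
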